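(* Let $\mathbb{D}=\{z\in\mathbb{C}:|z|<1\}$ and let $f$ be analytic in $\mathbb{D}$ and not linear. Then there is $0<r_0<1$ such that for all $0<r<r_0$, \[ \phi_{\operatorname{Area}}(r)=\frac{\operatorname{Area} f(r\mathbb{D})}{\pi r^2}>|f'(0)|^2. \]
   Context: $r\mathbb{D}=\{z:|z|<r\}$, $f(r\mathbb{D})$ is the image set, $\operatorname{Area}$ is two-dimensional Lebesgue measure. A function is linear if it is of the form $az+b$ with $a,b\in\mathbb{C}$ (constants allowed). *)

theory Defs
  imports "HOL-Complex_Analysis.Complex_Analysis"
begin

definition phi_Area :: "(complex \<Rightarrow> complex) \<Rightarrow> real \<Rightarrow> real" where
  "phi_Area f r = measure lebesgue (f ` ball 0 r) / (pi * r^2)"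

end

theory Submission
  imports Defs
begin

text \<open>If f'(0) = 0, the claim only says that f(rD) has positive area, which follows from the
  open mapping theorem. Otherwise f is injective near 0, and the change of variables formula gives
  Area f(rD) = (integral of |f'|^2 over rD). Writing f' = f'(0) + h, the cross term, the integral of
  Re (conj f'(0) h) over rD, vanishes by the mean value property of the holomorphic function h on
  discs, so Area f(rD) = pi r^2 |f'(0)|^2 + (integral of |h|^2 over rD), and the last integral is
  positive because f is not linear, so h does not vanish identically near 0. The mean value
  property on discs comes from rotation invariance of Lebesgue measure: averaging a holomorphic g
  over the rotations by the N-th roots of unity leaves g(0) up to an error that decays
  geometrically in N.\<close>

text \<open>The change of variables theorems of HOL-Analysis are stated for \<open>real^'n\<close>, so integrals
  over discs are taken in \<open>real^2\<close> and transported along this isometry.\<close>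

definition complex_of_vec :: "real^2 \<Rightarrow> complex" where
  "complex_of_vec x = Complex (vec_nth x 1) (vec_nth x 2)"

definition vec_of_complex :: "complex \<Rightarrow> real^2" where
  "vec_of_complex z = vector [Re z, Im z]"

lemma vec_of_complex_nth [simp]: "vec_nth (vec_of_complex z) 1 = Re z" "vec_nth (vec_of_complex z) 2 = Im z"
  by (simp_all add: vec_of_complex_def)

lemma complex_of_vec_inverse [simp]: "complex_of_vec (vec_of_complex z) = z"
  by (simp add: complex_of_vec_def complex_eq_iff)

lemma vec_of_complex_inverse [simp]: "vec_of_complex (complex_of_vec x) = x"
  by (simp add: vec_eq_iff forall_2 complex_of_vec_def)

lemma norm_complex_of_vec [simp]: "norm (complex_of_vec x) = norm x"
  by (simp add: complex_of_vec_def norm_vec_def L2_set_def UNIV_2 cmod_def)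

lemma norm_vec_of_complex [simp]: "norm (vec_of_complex z) = norm z"
  by (metis norm_complex_of_vec complex_of_vec_inverse)

lemma bounded_linear_complex_of_vec: "bounded_linear complex_of_vec"
  unfolding linear_conv_bounded_linear[symmetric]
  by (rule linearI) (simp_all add: complex_of_vec_def complex_eq_iff)

lemma bounded_linear_vec_of_complex: "bounded_linear vec_of_complex"
  unfolding linear_conv_bounded_linear[symmetric]
  by (rule linearI) (simp_all add: vec_eq_iff forall_2)

lemma continuous_on_complex_of_vec: "continuous_on S complex_of_vec"
  by (rule linear_continuous_on[OF bounded_linear_complex_of_vec])

lemma complex_of_vec_image_ball [simp]: "complex_of_vec ` ball 0 r = ball 0 r"
  by (auto simp: image_iff intro!: bexI[of _ "vec_of_complex x" for x])

lemma complex_of_vec_image_cball [simp]: "complex_of_vec ` cball 0 r = cball 0 r"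
  by (auto simp: image_iff intro!: bexI[of _ "vec_of_complex x" for x])

lemma complex_of_vec_vimage_box: "complex_of_vec -` box l u = box (vec_of_complex l) (vec_of_complex u)"
  by (auto simp: mem_box_cart forall_2 mem_box Basis_complex_def complex_of_vec_def)

lemma distr_lborel_complex_of_vec: "distr lborel borel complex_of_vec = lborel"
proof (rule lborel_eqI[symmetric])
  fix l u :: complex
  assume le: "\<And>b. b \<in> Basis \<Longrightarrow> l \<bullet> b \<le> u \<bullet> b"
  have axes: "(Basis :: (real^2) set) = {axis 1 1, axis 2 1}" "axis (1::2) (1::real) \<noteq> axis 2 1"
    by (auto simp: Basis_vec_def UNIV_2 axis_eq_axis)
  have "Re l \<le> Re u" "Im l \<le> Im u"
    using le[of 1] le[of \<i>] by (auto simp: Basis_complex_def)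
  then show "emeasure (distr lborel borel complex_of_vec) (box l u) = (\<Prod>b\<in>Basis. (u - l) \<bullet> b)"
    using borel_measurable_continuous_onI[OF continuous_on_complex_of_vec]
    by (simp add: emeasure_distr complex_of_vec_vimage_box emeasure_lborel_box_eq axes
        cart_eq_inner_axis[symmetric] Basis_complex_def)
qed simp

lemma measure_vec_of_complex_image:
  assumes "A \<in> sets borel"
  shows "measure lebesgue (vec_of_complex ` A) = measure lebesgue A"
proof -
  have borel: "complex_of_vec \<in> borel_measurable borel"
    by (rule borel_measurable_continuous_onI[OF continuous_on_complex_of_vec])
  have image: "vec_of_complex ` A = complex_of_vec -` A"
    by (auto simp: image_iff) (metis vec_of_complex_inverse)
  have "measure lebesgue (vec_of_complex ` A) = measure lborel (complex_of_vec -` A)"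
    using measurable_sets[OF borel assms] by (simp add: image)
  also have "\<dots> = measure (distr lborel borel complex_of_vec) A"
    using assms borel by (simp add: measure_distr)
  also have "\<dots> = measure lebesgue A"
    using assms by (simp add: distr_lborel_complex_of_vec)
  finally show ?thesis .
qed

lemma det_matrix_complex_mult:
  "det (matrix (\<lambda>v. vec_of_complex (c * complex_of_vec v))) = (cmod c)^2"
  unfolding cmod_power2 by (simp add: det_2 matrix_def axis_def complex_of_vec_def power2_eq_square)

lemma absolutely_integrable_on_compact:
  fixes f :: "'a::euclidean_space \<Rightarrow> 'b::euclidean_space"
  assumes "compact K" "continuous_on K f"
  shows "f absolutely_integrable_on K"
proof -
  have "integrable lborel (\<lambda>x. indicator K x *\<^sub>R f x)"
    by (rule borel_integrable_compact[OF assms])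
  then show ?thesis
    unfolding set_integrable_def
    using integrable_completion[of "(\<lambda>x. indicator K x *\<^sub>R f x)" lborel]
    by (simp add: borel_measurable_continuous_on_indicator borel_compact assms)
qed

lemma absolutely_integrable_on_ball_complex_of_vec:
  fixes k :: "complex \<Rightarrow> 'b::euclidean_space"
  assumes "continuous_on (cball 0 r) k"
  shows "(\<lambda>x. k (complex_of_vec x)) absolutely_integrable_on ball 0 r"
proof -
  have "continuous_on (cball 0 r) (\<lambda>x. k (complex_of_vec x))"
    by (rule continuous_on_compose2[OF assms continuous_on_complex_of_vec]) simp
  then have "(\<lambda>x. k (complex_of_vec x)) absolutely_integrable_on cball 0 r"
    by (intro absolutely_integrable_on_compact) auto
  then show ?thesis
    by (rule set_integrable_subset) auto
qed

lemma integrable_on_ball_complex_of_vec: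
  fixes k :: "complex \<Rightarrow> 'b::euclidean_space"
  assumes "continuous_on (cball 0 r) k"
  shows "(\<lambda>x. k (complex_of_vec x)) integrable_on ball 0 r"
  by (rule set_lebesgue_integral_eq_integral(1)[OF absolutely_integrable_on_ball_complex_of_vec[OF assms]])

lemma has_integral_const_lmeasurable:
  assumes "S \<in> lmeasurable"
  shows "((\<lambda>x. c) has_integral measure lebesgue S *\<^sub>R c) S"
proof -
  have "((\<lambda>x. 1::real) has_integral measure lebesgue S) S"
    using assms by (simp add: lmeasure_integral integrable_on_const integrable_integral)
  from has_integral_scaleR_left[OF this, of c] show ?thesis
    by simp
qed

lemma integral_pos_if_continuous_pos:
  fixes H :: "'a::euclidean_space \<Rightarrow> real"
  assumes "open S" "continuous_on S H" "H absolutely_integrable_on S"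
    and "\<And>x. x \<in> S \<Longrightarrow> 0 \<le> H x" "a \<in> S" "0 < H a"
  shows "0 < integral S H"
proof -
  obtain e where e: "0 < e" "ball a e \<subseteq> S"
    using assms(1,5) openE by blast
  have "isCont H a"
    using continuous_on_eq_continuous_at[OF assms(1)] assms(2,5) by blast
  then obtain d where d: "0 < d" "\<And>x. dist x a < d \<Longrightarrow> dist (H x) (H a) < H a / 2"
    using assms(6) unfolding continuous_at_eps_delta by (metis half_gt_zero)
  define B where "B = ball a (min d e)"
  have B: "B \<subseteq> S" "B \<in> lmeasurable" "0 < measure lebesgue B"
    using e d by (auto simp: B_def content_ball_pos)
  have int: "H integrable_on B" "H integrable_on S"
    using set_integrable_subset[OF assms(3) _ B(1)] assms(3) set_lebesgue_integral_eq_integral(1)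
    by (auto simp: B_def)
  have half: "H a / 2 \<le> H x" if "x \<in> B" for x
  proof -
    have "\<bar>H a - H x\<bar> < H a / 2"
      using d(2)[of x] that by (simp add: B_def dist_commute dist_real_def)
    then show ?thesis by linarith
  qed
  have "0 < measure lebesgue B *\<^sub>R (H a / 2)"
    using B(3) assms(6) by simp
  also have "\<dots> = integral B (\<lambda>x. H a / 2)"
    by (rule integral_unique[OF has_integral_const_lmeasurable[OF B(2)], symmetric])
  also have "\<dots> \<le> integral B H"
    by (rule integral_le) (use B half int in \<open>auto intro: integrable_on_const\<close>)
  also have "\<dots> \<le> integral S H"
    by (rule integral_subset_le[OF B(1) int]) (use assms(4) in auto)
  finally show ?thesis .
qed

lemma integral_ball_rotation:
  fixes k :: "complex \<Rightarrow> complex"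
  assumes k: "continuous_on (cball 0 r) k" and w: "cmod w = 1"
  shows "integral (ball 0 r) (\<lambda>x. k (w * complex_of_vec x)) = integral (ball 0 r) (\<lambda>x. k (complex_of_vec x))"
proof -
  define R where "R = (\<lambda>x. vec_of_complex (w * complex_of_vec x))"
  define F where "F = (\<lambda>y. vec_of_complex (k (complex_of_vec y)))"
  have lin: "linear R"
    unfolding R_def linear_conv_bounded_linear
    by (rule bounded_linear_compose[OF bounded_linear_vec_of_complex
          bounded_linear_compose[OF bounded_linear_mult_right bounded_linear_complex_of_vec]])
  have R_ball: "R ` ball 0 r = ball 0 r"
  proof (intro equalityI subsetI)
    fix y :: "real^2" assume "y \<in> ball 0 r"
    then show "y \<in> R ` ball 0 r"
      using w by (intro image_eqI[of _ _ "vec_of_complex (complex_of_vec y / w)"])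
        (auto simp: R_def norm_divide)
  qed (use w in \<open>auto simp: R_def norm_mult\<close>)
  have det: "\<bar>det (matrix R)\<bar> = 1"
    using det_matrix_complex_mult[of w] w by (simp add: R_def)
  have cont: "continuous_on (cball 0 r) (\<lambda>z. vec_of_complex (k (c * z)))" if "cmod c = 1" for c
    using that by (intro continuous_on_compose2[OF linear_continuous_on[OF bounded_linear_vec_of_complex]]
        continuous_on_compose2[OF k] continuous_intros) (auto simp: norm_mult)
  have "F absolutely_integrable_on R ` ball 0 r"
    unfolding R_ball F_def using absolutely_integrable_on_ball_complex_of_vec[OF cont, of 1] by simp
  then have "integral (R ` ball 0 r) F = \<bar>det (matrix R)\<bar> *\<^sub>R integral (ball 0 r) (F \<circ> R)"
    using integral_change_of_variables_linear[OF lin] by blast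
  then have eq: "integral (ball 0 r) F = integral (ball 0 r) (F \<circ> R)"
    by (simp add: R_ball det)
  have int: "F integrable_on ball 0 r" "(F \<circ> R) integrable_on ball 0 r"
    using integrable_on_ball_complex_of_vec[OF cont, of 1] integrable_on_ball_complex_of_vec[OF cont[OF w]]
    by (simp_all add: F_def R_def o_def)
  from int[THEN integral_linear, OF bounded_linear_complex_of_vec]
  have "integral (ball 0 r) (\<lambda>x. k (complex_of_vec x)) = complex_of_vec (integral (ball 0 r) F)"
    "integral (ball 0 r) (\<lambda>x. k (w * complex_of_vec x)) = complex_of_vec (integral (ball 0 r) (F \<circ> R))"
    by (simp_all add: F_def R_def o_def)
  then show ?thesis
    by (simp add: eq)
qed

section \<open>The mean value property on discs\<close>

lemma sum_root_of_unity_powers: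
  assumes N: "N \<ge> 1"
  defines "\<omega> \<equiv> exp (2 * complex_of_real pi * \<i> / of_nat N)"
  shows "(\<Sum>j<N. (\<omega> ^ n) ^ j) = (if N dvd n then of_nat N else 0)"
proof -
  have power_eq_1: "\<omega> ^ m = 1 \<longleftrightarrow> N dvd m" for m
  proof -
    have "\<omega> ^ m = exp (2 * complex_of_real pi * \<i> * of_nat m / of_nat N)"
      by (simp add: \<omega>_def exp_of_nat_mult[symmetric] mult_ac)
    then show ?thesis
      using complex_root_unity_eq_1[OF N] by simp
  qed
  show ?thesis
  proof (cases "N dvd n")
    case True
    then show ?thesis using power_eq_1[of n] by simp
  next
    case False
    have "(\<omega> ^ n) ^ N = 1"
      using power_eq_1[of "n * N"] by (simp add: power_mult)
    then show ?thesis
      using False power_eq_1 by (simp add: sum_gp_strict)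
  qed
qed

text \<open>Averaging over the \<open>N\<close>-th roots of unity kills every Taylor coefficient of \<open>g\<close> except
  those of index divisible by \<open>N\<close>.\<close>

lemma sums_sum_rotations:
  fixes g :: "complex \<Rightarrow> complex"
  assumes hol: "g holomorphic_on ball 0 R" and z: "cmod z < R" and N: "N \<ge> 1"
  shows "(\<lambda>n. (deriv^^n) g 0 / fact n * z^n * (if N dvd n then of_nat N else 0))
           sums (\<Sum>j<N. g (exp (2 * complex_of_real pi * \<i> / of_nat N) ^ j * z))"
proof -
  define \<omega> where "\<omega> = exp (2 * complex_of_real pi * \<i> / of_nat N)"
  define c where "c n = (deriv^^n) g 0 / fact n" for n
  have "(\<lambda>n. c n * (\<omega>^j * z)^n) sums g (\<omega>^j * z)" for j
    using holomorphic_power_series[OF hol, of "\<omega>^j * z"] z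
    by (simp add: c_def \<omega>_def norm_mult norm_power)
  then have "(\<lambda>n. \<Sum>j<N. c n * (\<omega>^j * z)^n) sums (\<Sum>j<N. g (\<omega>^j * z))"
    by (rule sums_sum)
  moreover have "(\<Sum>j<N. c n * (\<omega>^j * z)^n) = c n * z^n * (if N dvd n then of_nat N else 0)" for n
  proof -
    have "(\<Sum>j<N. c n * (\<omega>^j * z)^n) = c n * z^n * (\<Sum>j<N. (\<omega>^n)^j)"
      by (simp add: sum_distrib_left power_mult_distrib mult_ac flip: power_mult)
    then show ?thesis
      using sum_root_of_unity_powers[OF N, of n] by (simp add: \<omega>_def)
  qed
  ultimately show ?thesis
    by (simp add: c_def \<omega>_def)
qed

lemma sums_geometric_tail:
  fixes q :: real
  assumes "\<bar>q\<bar> < 1"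
  shows "(\<lambda>n. if N \<le> n then C * q^n else 0) sums (C * q^N / (1 - q))"
proof -
  have "(\<lambda>i. C * q^N * q^i) sums (C * q^N * (1 / (1 - q)))"
    by (intro sums_mult geometric_sums) (use assms in simp)
  moreover have "(\<lambda>i. if N \<le> i + N then C * q^(i + N) else 0) = (\<lambda>i. C * q^N * q^i)"
    by (simp add: power_add mult_ac)
  ultimately show ?thesis
    using sums_iff_shift[of "\<lambda>n. if N \<le> n then C * q^n else 0" N] by simp
qed

lemma norm_sum_rotations_diff_le:
  fixes g :: "complex \<Rightarrow> complex"
  assumes hol: "g holomorphic_on ball 0 R" and cont: "continuous_on (cball 0 R) g"
    and M: "\<And>z. z \<in> sphere 0 R \<Longrightarrow> cmod (g z) \<le> M"
    and z: "cmod z \<le> r" and r: "r < R" and N: "N \<ge> 1"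
  shows "cmod ((\<Sum>j<N. g (exp (2 * complex_of_real pi * \<i> / of_nat N) ^ j * z)) - of_nat N * g 0)
           \<le> real N * M * (r/R)^N / (1 - r/R)"
proof -
  define q where "q = r/R"
  define c where "c n = (deriv^^n) g 0 / fact n" for n
  define t where
    "t n = c n * z^n * (if N dvd n then of_nat N else 0) - (if n = 0 then of_nat N * g 0 else 0)" for n
  define b where "b n = (if N \<le> n then real N * M * q^n else 0)" for n
  have r0: "0 \<le> r" using z norm_ge_zero[of z] by linarith
  have R: "0 < R" using r0 r by linarith
  have q: "0 \<le> q" "q < 1" using r0 r R by (simp_all add: q_def)
  have "cmod (g (of_real R)) \<le> M" using M R by simp
  then have M0: "0 \<le> M" by (rule order_trans[OF norm_ge_zero])
  have coeff: "cmod (c n) \<le> M / R^n" for n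
    using Cauchy_inequality[OF hol cont R, of M n] M by (simp add: c_def norm_divide field_simps dist_norm)
  have "(\<lambda>n. c n * z^n * (if N dvd n then of_nat N else 0))
          sums (\<Sum>j<N. g (exp (2 * complex_of_real pi * \<i> / of_nat N) ^ j * z))"
    using sums_sum_rotations[OF hol _ N, of z] z r by (simp add: c_def)
  from sums_diff[OF this sums_single[of 0 "\<lambda>_. of_nat N * g 0"]]
  have t_sums: "t sums ((\<Sum>j<N. g (exp (2 * complex_of_real pi * \<i> / of_nat N) ^ j * z)) - of_nat N * g 0)"
    by (simp add: t_def[abs_def])
  have t_le: "cmod (t n) \<le> b n" for n
  proof (cases "n \<noteq> 0 \<and> N dvd n")
    case True
    then have "N \<le> n" by (simp add: dvd_imp_le)
    have "cmod (t n) = cmod (c n) * cmod z ^ n * real N"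
      using True by (simp add: t_def norm_mult norm_power)
    also have "\<dots> \<le> M / R^n * r^n * real N"
      by (intro mult_right_mono mult_mono coeff power_mono) (use z M0 R in auto)
    also have "\<dots> = real N * M * q^n"
      by (simp add: q_def power_divide)
    finally show ?thesis using \<open>N \<le> n\<close> by (simp add: b_def)
  qed (use N M0 q in \<open>auto simp: t_def c_def b_def\<close>)
  have b_sums: "b sums (real N * M * q^N / (1 - q))"
    unfolding b_def[abs_def] using q by (intro sums_geometric_tail) simp
  have "cmod (suminf t) \<le> suminf b"
    by (rule norm_suminf_le[OF t_le sums_summable[OF b_sums]])
  then show ?thesis
    using sums_unique[OF t_sums] sums_unique[OF b_sums] by (simp add: q_def)
qed

lemma norm_integral_ball_holomorphic_diff_le:
  fixes g :: "complex \<Rightarrow> complex"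
  assumes hol: "g holomorphic_on ball 0 R" and cont: "continuous_on (cball 0 R) g"
    and M: "\<And>z. z \<in> sphere 0 R \<Longrightarrow> cmod (g z) \<le> M"
    and r: "0 \<le> r" "r < R" and N: "N \<ge> 1"
  shows "cmod (integral (ball 0 r) (\<lambda>x. g (complex_of_vec x) - g 0))
           \<le> measure lebesgue (ball (0::real^2) r) * (M * (r/R)^N / (1 - r/R))"
proof -
  define \<omega> where "\<omega> = exp (2 * complex_of_real pi * \<i> / of_nat N)"
  define k where "k z = g z - g 0" for z
  define B where "B = M * (r/R)^N / (1 - r/R)"
  define I where "I = integral (ball 0 r) (\<lambda>x. k (complex_of_vec x))"
  have norm_\<omega>: "cmod (\<omega>^j) = 1" for j
    by (simp add: \<omega>_def norm_power)
  have cont_k: "continuous_on (cball 0 r) (\<lambda>z. k (\<omega>^j * z))" for j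
    unfolding k_def using r norm_\<omega>[of j]
    by (intro continuous_intros continuous_on_compose2[OF cont]) (auto simp: norm_mult)
  have int: "(\<lambda>x. k (\<omega>^j * complex_of_vec x)) integrable_on ball 0 r" for j
    by (rule integrable_on_ball_complex_of_vec[OF cont_k])
  have "integral (ball 0 r) (\<lambda>x. \<Sum>j<N. k (\<omega>^j * complex_of_vec x))
        = (\<Sum>j<N. integral (ball 0 r) (\<lambda>x. k (\<omega>^j * complex_of_vec x)))"
    by (rule integral_sum) (auto intro: int)
  also have "\<dots> = of_nat N * I"
    using integral_ball_rotation[OF cont_k[of 0] norm_\<omega>] by (simp add: I_def)
  finally have sum_eq: "integral (ball 0 r) (\<lambda>x. \<Sum>j<N. k (\<omega>^j * complex_of_vec x)) = of_nat N * I" .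
  have "cmod (\<Sum>j<N. k (\<omega>^j * complex_of_vec x)) \<le> real N * B" if "x \<in> ball 0 r" for x
    using norm_sum_rotations_diff_le[OF hol cont M _ r(2) N, of "complex_of_vec x"] that
    by (simp add: k_def sum_subtractf \<omega>_def B_def)
  then have "cmod (of_nat N * I) \<le> integral (ball (0::real^2) r) (\<lambda>x. real N * B)"
    unfolding sum_eq[symmetric]
    by (intro integral_norm_bound_integral integrable_sum int) (auto intro: integrable_on_const)
  also have "\<dots> = measure lebesgue (ball (0::real^2) r) *\<^sub>R (real N * B)"
    by (rule integral_unique[OF has_integral_const_lmeasurable]) simp
  finally have "real N * cmod I \<le> real N * (measure lebesgue (ball (0::real^2) r) * B)"
    by (simp add: norm_mult mult_ac)
  then have "cmod I \<le> measure lebesgue (ball (0::real^2) r) * B"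
    by (rule mult_left_le_imp_le) (use N in simp)
  then show ?thesis
    by (simp add: I_def k_def B_def)
qed

lemma integral_ball_holomorphic_diff_eq_0:
  fixes g :: "complex \<Rightarrow> complex"
  assumes hol: "g holomorphic_on ball 0 R" and r: "0 \<le> r" "r < R"
  shows "integral (ball 0 r) (\<lambda>x. g (complex_of_vec x) - g 0) = 0"
proof -
  define R' where "R' = (r + R) / 2"
  have R': "r < R'" "cball 0 R' \<subseteq> ball 0 R"
    using r by (auto simp: R'_def)
  have hol': "g holomorphic_on ball 0 R'"
    using holomorphic_on_subset[OF hol] R'(2) ball_subset_cball by blast
  have cont': "continuous_on (cball 0 R') g"
    by (rule continuous_on_subset[OF holomorphic_on_imp_continuous_on[OF hol] R'(2)])
  obtain M where M: "\<And>z. z \<in> sphere 0 R' \<Longrightarrow> cmod (g z) \<le> M"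
    using compact_imp_bounded[OF compact_continuous_image[OF cont' compact_cball]]
    unfolding bounded_iff by (meson image_eqI sphere_cball subsetD)
  define q where "q = r / R'"
  define C where "C = measure lebesgue (ball (0::real^2) r) * M / (1 - q)"
  have q: "0 \<le> q" "q < 1"
    using r R' by (simp_all add: q_def)
  have bound: "cmod (integral (ball 0 r) (\<lambda>x. g (complex_of_vec x) - g 0)) \<le> C * q ^ Suc n" for n
    using norm_integral_ball_holomorphic_diff_le[OF hol' cont' M r(1) R'(1), of "Suc n"]
    by (simp add: C_def q_def ac_simps)
  have "(\<lambda>n. C * q ^ Suc n) \<longlonglongrightarrow> 0"
    using LIMSEQ_Suc[OF tendsto_mult_right_zero[OF LIMSEQ_power_zero[of q]]] q by simp
  then have "cmod (integral (ball 0 r) (\<lambda>x. g (complex_of_vec x) - g 0)) \<le> 0"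
    using bound by (intro LIMSEQ_le_const) auto
  then show ?thesis by simp
qed

lemma has_integral_Re_mult_holomorphic_diff_ball:
  fixes g :: "complex \<Rightarrow> complex"
  assumes hol: "g holomorphic_on ball 0 R" and r: "0 \<le> r" "r < R"
  shows "((\<lambda>x. c * Re (w * (g (complex_of_vec x) - g 0))) has_integral 0) (ball 0 r)"
proof -
  have "continuous_on (cball 0 r) (\<lambda>z. g z - g 0)"
    using r by (intro continuous_intros continuous_on_subset[OF holomorphic_on_imp_continuous_on[OF hol]]) auto
  then have "(\<lambda>x. g (complex_of_vec x) - g 0) integrable_on ball 0 r"
    by (rule integrable_on_ball_complex_of_vec)
  moreover have "bounded_linear (\<lambda>v. c * Re (w * v))"
    by (rule bounded_linear_compose[OF bounded_linear_mult_right
          bounded_linear_compose[OF bounded_linear_Re bounded_linear_mult_right]])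
  ultimately have "((\<lambda>v. c * Re (w * v)) \<circ> (\<lambda>x. g (complex_of_vec x) - g 0) has_integral
      c * Re (w * integral (ball 0 r) (\<lambda>x. g (complex_of_vec x) - g 0))) (ball 0 r)"
    unfolding has_integral_integral by (rule has_integral_linear)
  then show ?thesis
    using integral_ball_holomorphic_diff_eq_0[OF hol r] by (simp add: o_def)
qed

section \<open>Area of the image of a disc\<close>

lemma measure_holomorphic_image_ball:
  fixes f :: "complex \<Rightarrow> complex"
  assumes hol: "f holomorphic_on ball 0 R" and r: "r < R" and inj: "inj_on f (ball 0 r)"
  shows "measure lebesgue (f ` ball 0 r) = integral (ball 0 r) (\<lambda>x. (cmod (deriv f (complex_of_vec x)))^2)"
proof -
  have sub: "cball 0 r \<subseteq> ball (0::complex) R"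
    using r by auto
  have "open (f ` ball 0 r)"
    using open_mapping_thm3[OF holomorphic_on_subset[OF hol] open_ball inj] sub ball_subset_cball
    by blast
  then have "measure lebesgue (f ` ball 0 r) = measure lebesgue (vec_of_complex ` f ` complex_of_vec ` ball 0 r)"
    by (simp add: measure_vec_of_complex_image[OF borel_open])
  also have "\<dots> = measure lebesgue ((\<lambda>x. vec_of_complex (f (complex_of_vec x))) ` ball 0 r)"
    by (simp only: image_image)
  also have "\<dots> = integral (ball 0 r) (\<lambda>x. \<bar>det (matrix (\<lambda>v. vec_of_complex (deriv f (complex_of_vec x) * complex_of_vec v)))\<bar>)"
  proof (rule measure_differentiable_image_eq)
    show "((\<lambda>x. vec_of_complex (f (complex_of_vec x))) has_derivative
            (\<lambda>v. vec_of_complex (deriv f (complex_of_vec x) * complex_of_vec v))) (at x within ball 0 r)"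
      if "x \<in> ball 0 r" for x
    proof -
      have "(f has_derivative (*) (deriv f (complex_of_vec x))) (at (complex_of_vec x))"
        using holomorphic_derivI[OF hol open_ball, of "complex_of_vec x"] that r
        by (auto simp: has_field_derivative_def)
      then show ?thesis
        by (intro has_derivative_compose[OF _ bounded_linear_imp_has_derivative[OF bounded_linear_vec_of_complex]]
            has_derivative_compose[OF bounded_linear_imp_has_derivative[OF bounded_linear_complex_of_vec]])
    qed
    show "inj_on (\<lambda>x. vec_of_complex (f (complex_of_vec x))) (ball 0 r)"
      using inj unfolding inj_on_def
      by (metis vec_of_complex_inverse complex_of_vec_inverse complex_of_vec_image_ball image_eqI)
    have "continuous_on (cball 0 r) (\<lambda>z. (cmod (deriv f z))^2)"
      using holomorphic_on_imp_continuous_on[OF holomorphic_deriv[OF hol open_ball]] sub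
      by (intro continuous_intros) (rule continuous_on_subset)
    then show "(\<lambda>x. \<bar>det (matrix (\<lambda>v. vec_of_complex (deriv f (complex_of_vec x) * complex_of_vec v)))\<bar>)
                 integrable_on ball 0 r"
      unfolding det_matrix_complex_mult abs_power2 abs_norm_cancel
      by (rule integrable_on_ball_complex_of_vec)
  qed simp
  finally show ?thesis
    by (simp add: det_matrix_complex_mult)
qed

lemma integral_norm_power2_ball_gt:
  fixes g :: "complex \<Rightarrow> complex"
  assumes hol: "g holomorphic_on ball 0 R" and r: "0 < r" "r < R"
    and z0: "z0 \<in> ball 0 r" "g z0 \<noteq> g 0"
  shows "pi * r^2 * (cmod (g 0))^2 < integral (ball 0 r) (\<lambda>x. (cmod (g (complex_of_vec x)))^2)"
proof -
  define h where "h x = g (complex_of_vec x) - g 0" for x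
  define E where "E = integral (ball 0 r) (\<lambda>x. (cmod (h x))^2)"
  have cont_g: "continuous_on (cball 0 r) g"
    using r by (intro continuous_on_subset[OF holomorphic_on_imp_continuous_on[OF hol]]) auto
  then have cont_h: "continuous_on (cball 0 r) (\<lambda>z. g z - g 0)"
    by (intro continuous_intros)
  have "((\<lambda>x. (cmod (g 0))^2) has_integral pi * r^2 * (cmod (g 0))^2) (ball (0::real^2) r)"
    using has_integral_const_lmeasurable[of "ball (0::real^2) r" "(cmod (g 0))^2"] r circle_area[of r 0]
    by (simp add: mult_ac)
  moreover have "((\<lambda>x. 2 * Re (cnj (g 0) * h x)) has_integral 0) (ball 0 r)"
    unfolding h_def using r by (intro has_integral_Re_mult_holomorphic_diff_ball[OF hol]) auto
  moreover have "((\<lambda>x. (cmod (h x))^2) has_integral E) (ball 0 r)" and E: "0 < E"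
  proof -
    have "continuous_on (cball 0 r) (\<lambda>z. (cmod (g z - g 0))^2)"
      using cont_g by (intro continuous_intros)
    then have abs_int: "(\<lambda>x. (cmod (h x))^2) absolutely_integrable_on ball 0 r"
      unfolding h_def by (rule absolutely_integrable_on_ball_complex_of_vec)
    then show "((\<lambda>x. (cmod (h x))^2) has_integral E) (ball 0 r)"
      unfolding E_def using set_lebesgue_integral_eq_integral(1) has_integral_integral by blast
    have "continuous_on (ball 0 r) (\<lambda>x. (cmod (h x))^2)"
      unfolding h_def
      by (intro continuous_intros continuous_on_compose2[OF cont_h continuous_on_complex_of_vec]) auto
    then show "0 < E"
      unfolding E_def
      by (rule integral_pos_if_continuous_pos[OF open_ball _ abs_int, where a = "vec_of_complex z0"])
        (use z0 in \<open>auto simp: h_def\<close>)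
  qed
  ultimately have "((\<lambda>x. (cmod (g 0))^2 + 2 * Re (cnj (g 0) * h x) + (cmod (h x))^2)
      has_integral pi * r^2 * (cmod (g 0))^2 + 0 + E) (ball 0 r)"
    by (intro has_integral_add)
  moreover have "(\<lambda>x. (cmod (g 0))^2 + 2 * Re (cnj (g 0) * h x) + (cmod (h x))^2)
      = (\<lambda>x. (cmod (g (complex_of_vec x)))^2)"
    unfolding h_def cmod_power2 by (simp add: power2_eq_square algebra_simps)
  ultimately have "integral (ball 0 r) (\<lambda>x. (cmod (g (complex_of_vec x)))^2) = pi * r^2 * (cmod (g 0))^2 + E"
    by (simp add: integral_unique)
  then show ?thesis
    using E by simp
qed

lemma holomorphic_deriv_const_imp_affine:
  fixes f :: "complex \<Rightarrow> complex"
  assumes hol: "f holomorphic_on S" and "open S" "convex S"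
    and deriv: "\<And>z. z \<in> S \<Longrightarrow> deriv f z = a"
  shows "\<exists>b. \<forall>z\<in>S. f z = a * z + b"
proof -
  have "((\<lambda>z. f z - a * z) has_field_derivative 0) (at z within S)" if "z \<in> S" for z
  proof -
    have "(f has_field_derivative a) (at z within S)"
      using holomorphic_derivI[OF hol \<open>open S\<close> that] deriv[OF that] by simp
    from DERIV_diff[OF this DERIV_cmult_Id[of a]] show ?thesis
      by simp
  qed
  then obtain b where "\<forall>z\<in>S. f z - a * z = b"
    using has_field_derivative_zero_constant[OF \<open>convex S\<close>] by blast
  then have "\<forall>z\<in>S. f z = a * z + b"
    by (simp add: algebra_simps)
  then show ?thesis ..
qed

lemma holomorphic_deriv_nonconstant_on_ball:
  fixes f :: "complex \<Rightarrow> complex"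
  assumes hol: "f holomorphic_on ball 0 R" and nonaffine: "\<not> (\<exists>a b. \<forall>z\<in>ball 0 R. f z = a * z + b)"
    and r: "0 < r" "r \<le> R"
  shows "\<exists>z\<in>ball 0 r. deriv f z \<noteq> deriv f 0"
proof (rule ccontr)
  assume "\<not> (\<exists>z\<in>ball 0 r. deriv f z \<noteq> deriv f 0)"
  then have "\<And>z. z \<in> ball 0 r \<Longrightarrow> deriv f z = deriv f 0"
    by blast
  then obtain b where affine: "\<forall>z\<in>ball 0 r. f z = deriv f 0 * z + b"
    using holomorphic_deriv_const_imp_affine[OF holomorphic_on_subset[OF hol subset_ball[OF r(2)]]
        open_ball convex_ball] by blast
  have affine_hol: "(\<lambda>z. deriv f 0 * z + b) holomorphic_on ball 0 R"
    by (intro holomorphic_intros)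
  have "f z = deriv f 0 * z + b" if "z \<in> ball 0 R" for z
    using analytic_continuation_open[OF open_ball open_ball _ connected_ball subset_ball[OF r(2)]
        hol affine_hol] affine that r(1) by auto
  with nonaffine show False
    by blast
qed

lemma measure_holomorphic_image_ball_gt:
  fixes f :: "complex \<Rightarrow> complex"
  assumes hol: "f holomorphic_on ball 0 R" and r: "0 < r" "r < R" and inj: "inj_on f (ball 0 r)"
    and z0: "z0 \<in> ball 0 r" "deriv f z0 \<noteq> deriv f 0"
  shows "pi * r^2 * (cmod (deriv f 0))^2 < measure lebesgue (f ` ball 0 r)"
proof -
  have "pi * r^2 * (cmod (deriv f 0))^2
        < integral (ball 0 r) (\<lambda>x. (cmod (deriv f (complex_of_vec x)))^2)"
    by (rule integral_norm_power2_ball_gt[OF holomorphic_deriv[OF hol open_ball] r z0])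
  also have "\<dots> = measure lebesgue (f ` ball 0 r)"
    by (rule measure_holomorphic_image_ball[OF hol r(2) inj, symmetric])
  finally show ?thesis .
qed

lemma measure_holomorphic_image_ball_pos:
  fixes f :: "complex \<Rightarrow> complex"
  assumes hol: "f holomorphic_on S" and S: "open S" "connected S" and nc: "\<not> f constant_on S"
    and r: "0 < r" "cball z r \<subseteq> S"
  shows "0 < measure lebesgue (f ` ball z r)"
proof -
  have "open (f ` ball z r)"
    using open_mapping_thm[OF hol S open_ball _ nc] r(2) ball_subset_cball by blast
  moreover have "f z \<in> f ` ball z r"
    using r(1) by simp
  ultimately obtain e where e: "0 < e" "ball (f z) e \<subseteq> f ` ball z r"
    by (rule openE)
  have "compact (f ` cball z r)"
    by (rule compact_continuous_image[OF continuous_on_subset[OF holomorphic_on_imp_continuous_on[OF hol] r(2)]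
          compact_cball])
  then have "bounded (f ` ball z r)"
    by (rule bounded_subset[OF compact_imp_bounded]) (use ball_subset_cball in blast)
  then have "f ` ball z r \<in> lmeasurable"
    using \<open>open (f ` ball z r)\<close> by (rule lmeasurable_open)
  then have "measure lebesgue (ball (f z) e) \<le> measure lebesgue (f ` ball z r)"
    using e(2) by (intro measure_mono_fmeasurable) auto
  moreover have "0 < measure lebesgue (ball (f z) e)"
    using content_ball_pos[OF e(1)] by simp
  ultimately show ?thesis by linarith
qed

theorem lemma2p2:
  fixes f :: "complex \<Rightarrow> complex"
  assumes "f holomorphic_on ball 0 1"
    and "\<not> (\<exists>a b. \<forall>z\<in>ball 0 1. f z = a * z + b)"
  shows "\<exists>r0. 0 < r0 \<and> r0 < 1 \<and>
           (\<forall>r. 0 < r \<and> r < r0 \<longrightarrow> phi_Area f r > (norm (deriv f 0))^2)"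
proof (cases "deriv f 0 = 0")
  case True
  have "\<not> f constant_on ball 0 1"
    using assms(2) unfolding constant_on_def by (metis mult_zero_left add_0)
  then have "0 < measure lebesgue (f ` ball 0 r)" if "0 < r" "r < 1/2" for r
    using that by (intro measure_holomorphic_image_ball_pos[OF assms(1) open_ball connected_ball])
      (simp_all add: cball_subset_ball_iff)
  then show ?thesis
    using True by (intro exI[of _ "1/2"]) (simp add: phi_Area_def)
next
  case False
  have "0 \<in> ball (0::complex) 1"
    by simp
  then obtain \<rho> where \<rho>: "0 < \<rho>" "inj_on f (ball 0 \<rho>)"
    by (rule has_complex_derivative_locally_injective[OF assms(1) _ open_ball False]) blast
  have "pi * r^2 * (cmod (deriv f 0))^2 < measure lebesgue (f ` ball 0 r)"
    if r: "0 < r" "r < min \<rho> (1/2)" for r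
  proof -
    obtain z0 where "z0 \<in> ball 0 r" "deriv f z0 \<noteq> deriv f 0"
      using holomorphic_deriv_nonconstant_on_ball[OF assms, of r] r by auto
    moreover have "inj_on f (ball 0 r)"
      by (rule inj_on_subset[OF \<rho>(2) subset_ball]) (use r(2) in simp)
    ultimately show ?thesis
      using r by (intro measure_holomorphic_image_ball_gt[OF assms(1)]) auto
  qed
  then show ?thesis
    using \<rho>(1) by (intro exI[of _ "min \<rho> (1/2)"]) (simp add: phi_Area_def pos_less_divide_eq mult_ac)
qed

end
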